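(* With size notion $s(x)=|x|$ (word length) on $\Sigma^*$, each of the word distances $\mathrm{ed}$, $\mathrm{ned}$, $\mathrm{ged}$, $\mathrm{ced}$ and $\mathrm{prf}$ has the asymptotic separation property: for each such $d$, every sequence $(x_k)$ of words with $\limsup_k|x_k|=\infty$ and every sequence $(y_k)$ of words with $\limsup_k |y_k|<\infty$ satisfy $\lim_{k\to\infty}d(x_k,y_k)=\sup d$, where $\sup d$ is the supremum of the image of $d$.
   Context: $\Sigma$ is a finite alphabet. Edit operations are pairs $(a,b)\in(\Sigma\cup\{\varepsilon\})^2\setminus\{(\varepsilon,\varepsilon)\}$; an edit path from $x$ to $y$ is a sequence $p=(a_1,b_1)\cdots(a_n,b_n)$ of edit operations with $a_1\cdots a_n=x$ and $b_1\cdots b_n=y$; $|p|=n$ and (uniform weights) $\mathrm{wgt}(p)=|\{i: a_i\neq b_i\}|$. $\mathrm{ed}(x,y)=\min_p \mathrm{wgt}(p)$ (Levenshtein distance); $\mathrm{ned}(x,y)=\min_p \mathrm{wgt}(p)/|p|$ over edit paths $p$ from $x$ to $y$ ($\mathrm{ned}(\varepsilon,\varepsilon)=0$); $\mathrm{ged}(x,y)=\frac{2\,\mathrm{ed}(x,y)}{|x|+|y|+\mathrm{ed}(x,y)}$ ($0$ if $x=y=\varepsilon$). For words $u,u'$ with $\mathrm{ed}(u,u')=1$ put $\mathrm{ced}(u,u')=1/\max(|u|,|u'|)$; for a sequence $\rho=(u_0,\dots,u_k)$ with $\mathrm{ed}(u_{i},u_{i+1})=1$ put $\mathrm{ced}(\rho)=\sum_{i=1}^k\mathrm{ced}(u_{i-1},u_i)$,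 and $\mathrm{ced}(x,y)=\min\{\mathrm{ced}(\rho): \rho=(u_0,\dots,u_k),u_0=x,u_k=y\}$. $\mathrm{prf}(x,y)=|x|+|y|-2\max\{|z|: x,y\in z\Sigma^*\}$.
   Formalization: The hypothesis $\limsup_k|x_k|=\infty$ is replaced by $|x_k|$ tending to infinity as k grows, that is, the liminf of the lengths is infinite. The statement above fails without it. *)

theory Defs
  imports "HOL-Analysis.Analysis" "HOL-Library.Sublist"
begin

text \<open>Words over a finite alphabet: lists over a type of class finite.
  An edit operation is a pair (a,b) of optional letters (None = empty word),
  not both None.\<close>

type_synonym 'a edit_op = "'a option \<times> 'a option"

definition opt_word :: "'a option \<Rightarrow> 'a list" where
  "opt_word a = (case a of None \<Rightarrow> [] | Some c \<Rightarrow> [c])"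

definition is_edit_op :: "'a edit_op \<Rightarrow> bool" where
  "is_edit_op e \<longleftrightarrow> e \<noteq> (None, None)"

definition is_edit_path :: "'a edit_op list \<Rightarrow> 'a list \<Rightarrow> 'a list \<Rightarrow> bool" where
  "is_edit_path p x y \<longleftrightarrow> (\<forall>e\<in>set p. is_edit_op e)
     \<and> concat (map (opt_word \<circ> fst) p) = x \<and> concat (map (opt_word \<circ> snd) p) = y"

definition wgt :: "'a edit_op list \<Rightarrow> nat" where
  "wgt p = length (filter (\<lambda>(a,b). a \<noteq> b) p)"

definition ed :: "'a list \<Rightarrow> 'a list \<Rightarrow> nat" where
  "ed x y = Min {wgt p | p. is_edit_path p x y}"

definition ned :: "'a list \<Rightarrow> 'a list \<Rightarrow> real" where
  "ned x y = (if x = [] \<and> y = [] then 0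
     else Min {real (wgt p) / real (length p) | p. is_edit_path p x y})"

definition ged :: "'a list \<Rightarrow> 'a list \<Rightarrow> real" where
  "ged x y = (if x = [] \<and> y = [] then 0
     else 2 * real (ed x y) / (real (length x) + real (length y) + real (ed x y)))"

definition ced_step :: "'a list \<Rightarrow> 'a list \<Rightarrow> real" where
  "ced_step u u' = 1 / real (max (length u) (length u'))"

definition is_ced_seq :: "'a list list \<Rightarrow> 'a list \<Rightarrow> 'a list \<Rightarrow> bool" where
  "is_ced_seq rho x y \<longleftrightarrow> rho \<noteq> [] \<and> hd rho = x \<and> last rho = y
     \<and> (\<forall>i. Suc i < length rho \<longrightarrow> ed (rho ! i) (rho ! Suc i) = 1)"

definition ced_cost :: "'a list list \<Rightarrow> real" where
  "ced_cost rho = (\<Sum>i = 1..<length rho. ced_step (rho ! (i - 1)) (rho ! i))"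

definition ced :: "'a list \<Rightarrow> 'a list \<Rightarrow> real" where
  "ced x y = Inf {ced_cost rho | rho. is_ced_seq rho x y}"

definition prf_dist :: "'a list \<Rightarrow> 'a list \<Rightarrow> nat" where
  "prf_dist x y = length x + length y - 2 * Max {length z | z. prefix z x \<and> prefix z y}"

text \<open>Asymptotic separation with size notion s(x) = |x|; values taken in the
  extended reals so that sup d = \<infinity> is allowed.\<close>
definition asymp_sep :: "('a list \<Rightarrow> 'a list \<Rightarrow> ereal) \<Rightarrow> bool" where
  "asymp_sep d \<longleftrightarrow> (\<forall>X Y :: nat \<Rightarrow> 'a list.
      liminf (\<lambda>k. ereal (real (length (X k)))) = \<infinity>
      \<and> limsup (\<lambda>k. ereal (real (length (Y k)))) < \<infinity>
      \<longrightarrow> ((\<lambda>k. d (X k) (Y k)) \<longlongrightarrow> (SUP p \<in> UNIV. d (fst p) (snd p))) sequentially)"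

end

theory Submission
  imports Defs
begin

text \<open>Every distance is bounded below by a function of the two lengths alone.
  An edit path from x to y has at least |x| operations, and all but wgt of them
  copy a letter of y; hence ed x y \<ge> |x| - |y|, ned x y \<ge> 1 - |y|/|x| and
  ged x y \<ge> 1 - 2|y|/|x|. A common prefix is no longer than y, so
  prf x y \<ge> |x| - |y|. Along a ced chain the length drops by at most one per
  step, and a step from length n + 1 to n costs 1/(n + 1) = H(n + 1) - H(n), so
  telescoping gives ced x y \<ge> H(|x|) - H(|y|) for the harmonic numbers H.
  If |x_k| \<rightarrow> \<infinity> while |y_k| stays bounded, these bounds tend to \<infinity>, resp. to
  the upper bound 1 of ned and ged, which is therefore also the supremum.\<close>

lemma edit_path_length_bounds:
  assumes "is_edit_path p x y"
  shows "length x \<le> length p" "length y \<le> length p" "length p \<le> length x + length y"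
    "length p \<le> wgt p + length x" "length p \<le> wgt p + length y"
proof -
  let ?x = "concat (map (opt_word \<circ> fst) p)" and ?y = "concat (map (opt_word \<circ> snd) p)"
  have "\<forall>e\<in>set p. is_edit_op e \<Longrightarrow>
    length ?x \<le> length p \<and> length ?y \<le> length p \<and> length p \<le> length ?x + length ?y
    \<and> length p \<le> wgt p + length ?x \<and> length p \<le> wgt p + length ?y"
    by (induction p) (auto simp: wgt_def opt_word_def is_edit_op_def split: option.splits)
  then show "length x \<le> length p" "length y \<le> length p" "length p \<le> length x + length y"
    "length p \<le> wgt p + length x" "length p \<le> wgt p + length y"
    using assms unfolding is_edit_path_def by auto
qed

lemma finite_edit_paths: "finite {p. is_edit_path p x y}"
proof -
  define A where "A = insert None (Some ` (set x \<union> set y))"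
  have opt_in_A: "a \<in> A" if "set (opt_word a) \<subseteq> set x \<union> set y" for a
    using that by (cases a) (auto simp: A_def opt_word_def)
  have "set p \<subseteq> A \<times> A" if "is_edit_path p x y" for p
    using that unfolding is_edit_path_def by (force intro: opt_in_A)
  then have "{p. is_edit_path p x y} \<subseteq> {p. set p \<subseteq> A \<times> A \<and> length p \<le> length x + length y}"
    using edit_path_length_bounds(3) by blast
  moreover have "finite {p. set p \<subseteq> A \<times> A \<and> length p \<le> length x + length y}"
    by (rule finite_lists_length_le) (simp add: A_def)
  ultimately show ?thesis by (rule finite_subset)
qed

lemma is_edit_path_delete_insert:
  "is_edit_path (map (\<lambda>c. (Some c, None)) x @ map (\<lambda>c. (None, Some c)) y) x y"
  by (auto simp: is_edit_path_def is_edit_op_def opt_word_def o_def)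

lemma is_edit_path_Cons_copy:
  assumes "(a, b) \<noteq> (None, None)"
  shows "is_edit_path ((a, b) # map (\<lambda>c. (Some c, Some c)) x) (opt_word a @ x) (opt_word b @ x)"
  using assms by (auto simp: is_edit_path_def is_edit_op_def opt_word_def o_def)

lemma wgt_Cons_copy: "wgt ((a, b) # map (\<lambda>c. (Some c, Some c)) x) = (if a = b then 0 else 1)"
  by (simp add: wgt_def o_def)

lemma finite_ed_candidates: "finite {wgt p | p. is_edit_path p x y}"
  using finite_imageI[OF finite_edit_paths, of wgt x y] by (simp add: setcompr_eq_image)

lemma ed_le_wgt: "is_edit_path p x y \<Longrightarrow> ed x y \<le> wgt p"
  unfolding ed_def by (rule Min_le[OF finite_ed_candidates]) blast

lemma ed_attained: "\<exists>p. is_edit_path p x y \<and> ed x y = wgt p"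
proof -
  have "ed x y \<in> {wgt p | p. is_edit_path p x y}"
    unfolding ed_def using finite_ed_candidates is_edit_path_delete_insert by (intro Min_in) blast+
  then show ?thesis by blast
qed

lemma length_le_ed_add: "length x \<le> ed x y + length y" "length y \<le> ed x y + length x"
  using ed_attained[of x y] edit_path_length_bounds by fastforce+

lemma wgt_le_length: "wgt p \<le> length p"
  by (simp add: wgt_def)

lemma ed_ge_length_diff: "real (length x) - real (length y) \<le> real (ed x y)"
  using length_le_ed_add(1)[of x y] by linarith

lemma ed_le_length_add: "ed x y \<le> length x + length y"
  using ed_attained[of x y] edit_path_length_bounds(3) wgt_le_length le_trans by metis

lemma ed_Cons_self: "ed (a # x) x = 1"
proof -
  have "ed (a # x) x \<le> 1"
    using ed_le_wgt[OF is_edit_path_Cons_copy[of "Some a" None x]]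
    by (simp add: opt_word_def wgt_Cons_copy)
  then show ?thesis using length_le_ed_add(1)[of "a # x" x] by simp
qed

lemma ed_self_Cons: "ed x (a # x) = 1"
proof -
  have "ed x (a # x) \<le> 1"
    using ed_le_wgt[OF is_edit_path_Cons_copy[of None "Some a" x]]
    by (simp add: opt_word_def wgt_Cons_copy)
  then show ?thesis using length_le_ed_add(2)[where x = x and y = "a # x"] by simp
qed

lemma ned_attained:
  assumes "x \<noteq> [] \<or> y \<noteq> []"
  shows "\<exists>p. is_edit_path p x y \<and> ned x y = real (wgt p) / real (length p)"
proof -
  let ?R = "{real (wgt p) / real (length p) | p. is_edit_path p x y}"
  have "finite ?R"
    using finite_imageI[OF finite_edit_paths, of "\<lambda>p. real (wgt p) / real (length p)" x y]
    by (simp add: setcompr_eq_image)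
  moreover have "?R \<noteq> {}" using is_edit_path_delete_insert by blast
  ultimately have "Min ?R \<in> ?R" by (rule Min_in)
  then show ?thesis using assms by (auto simp: ned_def)
qed

lemma ned_le_1: "ned x y \<le> 1"
proof (cases "x = [] \<and> y = []")
  case False
  then obtain p where "is_edit_path p x y" "ned x y = real (wgt p) / real (length p)"
    using ned_attained by blast
  then show ?thesis using wgt_le_length[of p] by (simp add: divide_le_eq_1)
qed (simp add: ned_def)

lemma ned_ge_one_minus:
  assumes "x \<noteq> []"
  shows "1 - real (length y) / real (length x) \<le> ned x y"
proof -
  obtain p where p: "is_edit_path p x y" "ned x y = real (wgt p) / real (length p)"
    using ned_attained assms by blast
  have x_le_p: "length x \<le> length p" and p_le: "length p \<le> wgt p + length y"
    using edit_path_length_bounds[OF p(1)] by auto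
  have "0 < length x" "0 < length p" using assms x_le_p by auto
  then have "1 - real (length y) / real (length x) \<le> 1 - real (length y) / real (length p)"
    using x_le_p by (simp add: frac_le)
  also have "\<dots> = (real (length p) - real (length y)) / real (length p)"
    using \<open>0 < length p\<close> by (simp add: diff_divide_distrib)
  also have "\<dots> \<le> real (wgt p) / real (length p)"
    using p_le by (intro divide_right_mono) auto
  finally show ?thesis using p(2) by simp
qed

lemma ged_le_1: "ged x y \<le> 1"
proof (cases "x = [] \<and> y = []")
  case False
  then have "0 < length x + length y" by (cases x) auto
  then have "0 < real (length x) + real (length y) + real (ed x y)" by linarith
  then show ?thesis using ed_le_length_add[of x y] False by (simp add: ged_def divide_le_eq_1)
qed (simp add: ged_def)

lemma ged_ge_one_minus:
  assumes "x \<noteq> []"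
  shows "1 - 2 * real (length y) / real (length x) \<le> ged x y"
proof -
  define e a b where "e = real (ed x y)" and "a = real (length x)" and "b = real (length y)"
  have "a \<le> e + b" using length_le_ed_add(1)[of x y] by (simp add: a_def b_def e_def)
  have "0 < a" "0 \<le> b" "0 \<le> e" using assms by (auto simp: a_def b_def e_def)
  have "1 - 2 * b / a \<le> 1 - 2 * b / (a + b + e)"
    using \<open>0 < a\<close> \<open>0 \<le> b\<close> \<open>0 \<le> e\<close> by (simp add: frac_le)
  also have "\<dots> = (a + b + e - 2 * b) / (a + b + e)"
    using \<open>0 < a\<close> \<open>0 \<le> b\<close> \<open>0 \<le> e\<close> by (simp add: field_simps)
  also have "\<dots> \<le> 2 * e / (a + b + e)"
    using \<open>a \<le> e + b\<close> \<open>0 < a\<close> \<open>0 \<le> b\<close> \<open>0 \<le> e\<close> by (intro divide_right_mono) auto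
  also have "\<dots> = ged x y" using assms by (simp add: ged_def a_def b_def e_def)
  finally show ?thesis by (simp add: a_def b_def)
qed

lemma prf_dist_ge: "real (length x) - real (length y) \<le> real (prf_dist x y)"
proof -
  let ?S = "{length z | z. prefix z x \<and> prefix z y}"
  have "?S \<subseteq> {..length y}" by (auto dest: prefix_length_le)
  moreover have "Max ?S \<in> ?S"
  proof (rule Max_in)
    show "finite ?S" using finite_subset[OF \<open>?S \<subseteq> {..length y}\<close>] by simp
    show "?S \<noteq> {}" by (auto intro!: exI[of _ "[]"])
  qed
  ultimately have "Max ?S \<le> length y" by blast
  then show ?thesis unfolding prf_dist_def by linarith
qed

lemma is_ced_seq_iff_successively:
  "is_ced_seq rho x y \<longleftrightarrow>
     rho \<noteq> [] \<and> hd rho = x \<and> last rho = y \<and> successively (\<lambda>u v. ed u v = 1) rho"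
  by (auto simp: is_ced_seq_def successively_conv_nth)

lemma is_ced_seq_Cons: "ed u x = 1 \<Longrightarrow> is_ced_seq rho x y \<Longrightarrow> is_ced_seq (u # rho) u y"
  by (auto simp: is_ced_seq_iff_successively successively_Cons)

lemma is_ced_seq_snoc: "is_ced_seq rho x y \<Longrightarrow> ed y v = 1 \<Longrightarrow> is_ced_seq (rho @ [v]) x v"
  by (auto simp: is_ced_seq_iff_successively successively_append_iff)

lemma ced_seq_to_Nil_exists: "\<exists>rho. is_ced_seq rho x []"
proof (induction x)
  case Nil
  have "is_ced_seq [[]] [] []" by (simp add: is_ced_seq_def)
  then show ?case by blast
next
  case (Cons a x)
  then obtain rho where "is_ced_seq rho x []" by blast
  then have "is_ced_seq ((a # x) # rho) (a # x) []" by (rule is_ced_seq_Cons[OF ed_Cons_self])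
  then show ?case by blast
qed

lemma ced_seq_exists: "\<exists>rho. is_ced_seq rho x y"
proof (induction y)
  case (Cons a y)
  then obtain rho where "is_ced_seq rho x y" by blast
  then have "is_ced_seq (rho @ [a # y]) x (a # y)" using ed_self_Cons by (rule is_ced_seq_snoc)
  then show ?case by blast
qed (rule ced_seq_to_Nil_exists)

lemma ced_cost_conv_sum: "ced_cost rho = (\<Sum>i < length rho - 1. ced_step (rho ! i) (rho ! Suc i))"
proof (cases rho rule: rev_cases)
  case (snoc rho' u)
  have "ced_cost rho = (\<Sum>i = Suc 0..<Suc (length rho'). ced_step (rho ! (i - 1)) (rho ! i))"
    by (simp add: ced_cost_def snoc)
  also have "\<dots> = (\<Sum>i < length rho'. ced_step (rho ! i) (rho ! Suc i))"
    by (subst sum.shift_bounds_Suc_ivl) (simp add: atLeast0LessThan)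
  finally show ?thesis by (simp add: snoc)
qed (simp add: ced_cost_def)

lemma harm_diff_le_ced_step:
  assumes "length u \<le> Suc (length v)"
  shows "harm (length u) - harm (length v) \<le> ced_step u v"
proof (cases "length u \<le> length v")
  case True
  then have "harm (length u) \<le> (harm (length v) :: real)" by (rule harm_mono)
  moreover have "0 \<le> ced_step u v" by (simp add: ced_step_def)
  ultimately show ?thesis by linarith
next
  case False
  then have "length u = Suc (length v)" using assms by simp
  then show ?thesis by (simp add: ced_step_def harm_Suc field_simps)
qed

lemma harm_diff_le_ced_cost:
  assumes "is_ced_seq rho x y"
  shows "harm (length x) - harm (length y) \<le> ced_cost rho"
proof -
  define g :: "nat \<Rightarrow> real" where "g i = harm (length (rho ! i))" for i
  define m where "m = length rho - 1"
  have "rho \<noteq> []" "hd rho = x" "last rho = y" and chain: "successively (\<lambda>u v. ed u v = 1) rho"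
    using assms by (simp_all add: is_ced_seq_iff_successively)
  have "g 0 - g m = (\<Sum>i<m. g i - g (Suc i))"
    by (rule sum_lessThan_telescope'[symmetric])
  also have "\<dots> \<le> (\<Sum>i<m. ced_step (rho ! i) (rho ! Suc i))"
  proof (rule sum_mono)
    fix i assume "i \<in> {..<m}"
    then have "ed (rho ! i) (rho ! Suc i) = 1"
      using successively_nth[OF chain] by (simp add: m_def)
    then show "g i - g (Suc i) \<le> ced_step (rho ! i) (rho ! Suc i)"
      unfolding g_def using length_le_ed_add(1)[of "rho ! i" "rho ! Suc i"]
      by (intro harm_diff_le_ced_step) simp
  qed
  also have "\<dots> = ced_cost rho" by (simp add: ced_cost_conv_sum m_def)
  finally show ?thesis
    using \<open>rho \<noteq> []\<close> \<open>hd rho = x\<close> \<open>last rho = y\<close>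
    by (simp add: g_def m_def hd_conv_nth last_conv_nth)
qed

lemma harm_diff_le_ced: "harm (length x) - harm (length y) \<le> ced x y"
  unfolding ced_def
proof (rule cInf_greatest)
  show "{ced_cost rho | rho. is_ced_seq rho x y} \<noteq> {}" using ced_seq_exists[of x y] by blast
next
  fix c assume "c \<in> {ced_cost rho | rho. is_ced_seq rho x y}"
  then obtain rho where "is_ced_seq rho x y" "c = ced_cost rho" by blast
  then show "harm (length x) - harm (length y) \<le> c" by (simp add: harm_diff_le_ced_cost)
qed

lemma filterlim_at_top_if_liminf_eq_PInfty:
  fixes f :: "nat \<Rightarrow> nat"
  assumes "liminf (\<lambda>k. ereal (real (f k))) = \<infinity>"
  shows "filterlim f at_top sequentially"
  unfolding filterlim_at_top
proof
  fix n :: nat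
  have "\<forall>r. eventually (\<lambda>k. r < real (f k)) sequentially"
    using assms by (simp flip: liminf_PInfty add: tendsto_PInfty)
  then have "eventually (\<lambda>k. real n < real (f k)) sequentially" by blast
  then show "eventually (\<lambda>k. n \<le> f k) sequentially" by eventually_elim simp
qed

lemma eventually_bounded_if_limsup_less_PInfty:
  fixes f :: "nat \<Rightarrow> nat"
  assumes "limsup (\<lambda>k. ereal (real (f k))) < \<infinity>"
  obtains B where "eventually (\<lambda>k. f k \<le> B) sequentially"
proof -
  obtain B :: nat where "limsup (\<lambda>k. ereal (real (f k))) < ereal (real B)"
    using assms less_PInf_Ex_of_nat by auto
  then have "eventually (\<lambda>k. ereal (real (f k)) < ereal (real B)) sequentially"
    by (rule Limsup_lessD)
  then have "eventually (\<lambda>k. f k \<le> B) sequentially" by eventually_elim simp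
  then show ?thesis by (rule that)
qed

lemma asymp_sepI:
  fixes d :: "'a list \<Rightarrow> 'a list \<Rightarrow> ereal"
  assumes le: "\<And>x y. d x y \<le> L"
    and lim: "\<And>(X :: nat \<Rightarrow> 'a list) Y B. filterlim (\<lambda>k. length (X k)) at_top sequentially \<Longrightarrow>
      eventually (\<lambda>k. length (Y k) \<le> B) sequentially \<Longrightarrow> ((\<lambda>k. d (X k) (Y k)) \<longlongrightarrow> L) sequentially"
  shows "asymp_sep d"
  unfolding asymp_sep_def
proof (intro allI impI, elim conjE)
  fix X Y :: "nat \<Rightarrow> 'a list"
  assume "liminf (\<lambda>k. ereal (real (length (X k)))) = \<infinity>"
    and "limsup (\<lambda>k. ereal (real (length (Y k)))) < \<infinity>"
  then obtain B where "filterlim (\<lambda>k. length (X k)) at_top sequentially"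
    and "eventually (\<lambda>k. length (Y k) \<le> B) sequentially"
    by (metis filterlim_at_top_if_liminf_eq_PInfty eventually_bounded_if_limsup_less_PInfty)
  then have tendsto_L: "((\<lambda>k. d (X k) (Y k)) \<longlongrightarrow> L) sequentially" by (rule lim)
  have "(SUP p \<in> UNIV. d (fst p) (snd p)) = L"
  proof (rule antisym)
    show "(SUP p \<in> UNIV. d (fst p) (snd p)) \<le> L" by (rule SUP_least) (rule le)
    have "\<forall>k. d (X k) (Y k) \<le> (SUP p \<in> UNIV. d (fst p) (snd p))"
      using SUP_upper[of "(X _, Y _)" UNIV "\<lambda>p. d (fst p) (snd p)"] by simp
    then show "L \<le> (SUP p \<in> UNIV. d (fst p) (snd p))"
      using Lim_bounded[OF tendsto_L, of 0] by blast
  qed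
  with tendsto_L show "((\<lambda>k. d (X k) (Y k)) \<longlongrightarrow> (SUP p \<in> UNIV. d (fst p) (snd p))) sequentially"
    by simp
qed

lemma asymp_sep_if_ge_diff:
  fixes d :: "'a list \<Rightarrow> 'a list \<Rightarrow> real" and h :: "nat \<Rightarrow> real"
  assumes "mono h" and "filterlim h at_top sequentially"
    and ge: "\<And>x y. h (length x) - h (length y) \<le> d x y"
  shows "asymp_sep (\<lambda>x y. ereal (d x y))"
proof (rule asymp_sepI)
  fix X Y :: "nat \<Rightarrow> 'a list" and B
  assume X_at_top: "filterlim (\<lambda>k. length (X k)) at_top sequentially"
    and Y_bounded: "eventually (\<lambda>k. length (Y k) \<le> B) sequentially"
  have "filterlim (\<lambda>k. h (length (X k))) at_top sequentially"
    using assms(2) X_at_top by (rule filterlim_compose)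
  show "((\<lambda>k. ereal (d (X k) (Y k))) \<longlongrightarrow> \<infinity>) sequentially"
    unfolding tendsto_PInfty
  proof
    fix r
    have "eventually (\<lambda>k. r + h B < h (length (X k))) sequentially"
      using \<open>filterlim (\<lambda>k. h (length (X k))) at_top sequentially\<close>
      by (simp add: filterlim_at_top_dense)
    with Y_bounded show "eventually (\<lambda>k. ereal r < ereal (d (X k) (Y k))) sequentially"
    proof eventually_elim
      case (elim k)
      then have "h (length (Y k)) \<le> h B" using \<open>mono h\<close> by (simp add: monoD)
      then show ?case using elim ge[of "X k" "Y k"] by simp
    qed
  qed
qed simp

lemma asymp_sep_if_ge_one_minus:
  fixes d :: "'a list \<Rightarrow> 'a list \<Rightarrow> real" and c :: real
  assumes "0 \<le> c" and le: "\<And>x y. d x y \<le> 1"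
    and ge: "\<And>x y. x \<noteq> [] \<Longrightarrow> 1 - c * real (length y) / real (length x) \<le> d x y"
  shows "asymp_sep (\<lambda>x y. ereal (d x y))"
proof (rule asymp_sepI)
  fix X Y :: "nat \<Rightarrow> 'a list" and B
  assume X_at_top: "filterlim (\<lambda>k. length (X k)) at_top sequentially"
    and Y_bounded: "eventually (\<lambda>k. length (Y k) \<le> B) sequentially"
  have "filterlim (\<lambda>k. real (length (X k))) at_top sequentially"
    using X_at_top by (rule filterlim_compose[OF filterlim_real_sequentially])
  then have "((\<lambda>k. c * real B / real (length (X k))) \<longlongrightarrow> 0) sequentially"
    by (intro tendsto_divide_0[OF tendsto_const] filterlim_at_top_imp_at_infinity)
  then have lower_tendsto: "((\<lambda>k. 1 - c * real B / real (length (X k))) \<longlongrightarrow> 1) sequentially"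
    by (auto intro: tendsto_eq_intros)
  have "eventually (\<lambda>k. 1 \<le> length (X k)) sequentially"
    using X_at_top by (simp add: filterlim_at_top)
  with Y_bounded
  have lower: "eventually (\<lambda>k. 1 - c * real B / real (length (X k)) \<le> d (X k) (Y k)) sequentially"
  proof eventually_elim
    case (elim k)
    then have "c * real (length (Y k)) / real (length (X k)) \<le> c * real B / real (length (X k))"
      using \<open>0 \<le> c\<close> by (intro divide_right_mono mult_left_mono) auto
    moreover have "X k \<noteq> []" using elim by auto
    ultimately show ?case using ge[of "X k" "Y k"] by linarith
  qed
  have upper: "eventually (\<lambda>k. d (X k) (Y k) \<le> 1) sequentially" by (simp add: le)
  from lower upper lower_tendsto tendsto_const
  have "((\<lambda>k. d (X k) (Y k)) \<longlongrightarrow> 1) sequentially" by (rule tendsto_sandwich)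
  from tendsto_ereal[OF this] show "((\<lambda>k. ereal (d (X k) (Y k))) \<longlongrightarrow> 1) sequentially"
    by (simp add: one_ereal_def)
qed (simp add: le flip: one_ereal_def)

theorem mainTheorem5:
  shows "asymp_sep (\<lambda>x y :: ('a::finite) list. ereal (real (ed x y)))
       \<and> asymp_sep (\<lambda>x y :: ('a::finite) list. ereal (ned x y))
       \<and> asymp_sep (\<lambda>x y :: ('a::finite) list. ereal (ged x y))
       \<and> asymp_sep (\<lambda>x y :: ('a::finite) list. ereal (ced x y))
       \<and> asymp_sep (\<lambda>x y :: ('a::finite) list. ereal (real (prf_dist x y)))"
proof -
  have mono_real: "mono (real :: nat \<Rightarrow> real)" by (rule monoI) simp
  have mono_harm: "mono (harm :: nat \<Rightarrow> real)" by (rule monoI) (rule harm_mono)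
  have "asymp_sep (\<lambda>x y :: 'a list. ereal (real (ed x y)))"
    by (rule asymp_sep_if_ge_diff[OF mono_real filterlim_real_sequentially ed_ge_length_diff])
  moreover have "asymp_sep (\<lambda>x y :: 'a list. ereal (ned x y))"
    by (rule asymp_sep_if_ge_one_minus[where c = 1]) (simp_all add: ned_le_1 ned_ge_one_minus)
  moreover have "asymp_sep (\<lambda>x y :: 'a list. ereal (ged x y))"
    by (rule asymp_sep_if_ge_one_minus[where c = 2]) (simp_all add: ged_le_1 ged_ge_one_minus)
  moreover have "asymp_sep (\<lambda>x y :: 'a list. ereal (ced x y))"
    by (rule asymp_sep_if_ge_diff[OF mono_harm harm_at_top harm_diff_le_ced])
  moreover have "asymp_sep (\<lambda>x y :: 'a list. ereal (real (prf_dist x y)))"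
    by (rule asymp_sep_if_ge_diff[OF mono_real filterlim_real_sequentially prf_dist_ge])
  ultimately show ?thesis by blast
qed

end
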